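(* Let $\eta>0$ and $\phi_{\exp}(y,t)=\exp(\sqrt2\eta y-\eta^2t)$ with $\mathcal D=\mathbb{R}$. For ${\sf CP}(\phi_{\exp},\mathbb{R})$ with $t_0=0$, at any iteration with time variable $t$, the $\epsilon$-quantile regret (for $\epsilon\in(0,1]$) satisfies $$\mathrm{Regret}_\epsilon\le\frac{\eta t}{\sqrt2}+\frac{\log(1/\epsilon)}{\sqrt2\eta}.$$
   Context: Experts game: $N$ experts, constant $B>0$; each round $j$ the player picks $\boldsymbol p_j\in\Delta^{N-1}$, nature reveals $\boldsymbol\ell_j\in\mathbb{R}^N$ with $\max_{i,i'}|\ell_{j,i}-\ell_{j,i'}|\le B$; $\Delta x_{j,i}=\langle\boldsymbol p_j,\boldsymbol\ell_j\rangle-\ell_{j,i}$, $\boldsymbol x_j=\sum_{k\le j}\Delta\boldsymbol x_k$. At iteration $j$, $\mathrm{Regret}_\epsilon=x_{j,(\lfloor N\epsilon\rfloor)}$, the $\lfloor N\epsilon\rfloor$-th largest coordinate of $\boldsymbol x_j$. For potential $\phi$ and interval $\mathcal D$ with projection $\Pi_{\mathcal D}$ (coordinatewise), $\Phi(\boldsymbol x,t)=\sum_i\phi(x_i,t)$. Algorithm ${\sf CP}(\phi,\mathcal D)$ with initial time $t_0$: $\boldsymbol x_0=\boldsymbol0$, $\tilde{\boldsymbol x}_0=\Pi_{\mathcal D}(\boldsymbol x_0)$. For $j=1,2,\dots$: play $p_{j,i}\propto\partial_x\phi(\tilde x_{j-1,i},t_{j-1})$ (arbitrary if all zero); set $\boldsymbol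 x_j=\boldsymbol x_{j-1}+\Delta\boldsymbol x_j$, $\tilde{\boldsymbol x}_j=\Pi_{\mathcal D}(\boldsymbol x_j)$; choose $\Delta t_j\ge0$ with $\Phi(\tilde{\boldsymbol x}_j,t_{j-1}+\Delta t_j)=\Phi(\tilde{\boldsymbol x}_{j-1},t_{j-1})$; set $t_j=t_{j-1}+\Delta t_j$. The time variable at iteration $j$ is $t_j$. *)

theory Defs
  imports "HOL-Analysis.Analysis"
begin

text \<open>Experts are indexed by 0..N-1, rounds by j = 1,2,...;
  vectors are functions nat => real, only coordinates i < N matter.\<close>

definition kth_largest :: "nat \<Rightarrow> (nat \<Rightarrow> real) \<Rightarrow> nat \<Rightarrow> real" where
  "kth_largest N x k = rev (sort (map x [0..<N])) ! (k - 1)"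

definition quantile_regret :: "nat \<Rightarrow> real \<Rightarrow> (nat \<Rightarrow> real) \<Rightarrow> real" where
  "quantile_regret N eps x = kth_largest N x (nat \<lceil>real N * eps\<rceil>)"

definition Pot :: "(real \<Rightarrow> real \<Rightarrow> real) \<Rightarrow> nat \<Rightarrow> (nat \<Rightarrow> real) \<Rightarrow> real \<Rightarrow> real" where
  "Pot \<phi> N x s = (\<Sum>i<N. \<phi> (x i) s)"

text \<open>A run of CP(phi, D) (projection proj onto D applied coordinatewise) with
  initial time t0 against losses l (l j = loss vector of round j, j >= 1):
  p j = played distribution, x j = cumulative regret vector, t j = time variable.\<close>
definition cp_run ::
  "nat \<Rightarrow> real \<Rightarrow> (real \<Rightarrow> real \<Rightarrow> real) \<Rightarrow> (real \<Rightarrow> real) \<Rightarrow> real \<Rightarrow>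
   (nat \<Rightarrow> nat \<Rightarrow> real) \<Rightarrow> (nat \<Rightarrow> nat \<Rightarrow> real) \<Rightarrow> (nat \<Rightarrow> nat \<Rightarrow> real) \<Rightarrow> (nat \<Rightarrow> real) \<Rightarrow> bool"
where
  "cp_run N B \<phi> proj t0 l p x t \<longleftrightarrow>
     x 0 = (\<lambda>i. 0) \<and> t 0 = t0 \<and>
     (\<forall>j. (\<forall>i<N. \<forall>i'<N. \<bar>l (Suc j) i - l (Suc j) i'\<bar> \<le> B) \<and>
          (\<forall>i<N. 0 \<le> p (Suc j) i) \<and> (\<Sum>i<N. p (Suc j) i) = 1 \<and>
          ((\<exists>i<N. deriv (\<lambda>y. \<phi> y (t j)) (proj (x j i)) \<noteq> 0) \<longrightarrow>
             (\<exists>c>0. \<forall>i<N. p (Suc j) i = c * deriv (\<lambda>y. \<phi> y (t j)) (proj (x j i)))) \<and>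
          x (Suc j) = (\<lambda>i. x j i + ((\<Sum>k<N. p (Suc j) k * l (Suc j) k) - l (Suc j) i)) \<and>
          t j \<le> t (Suc j) \<and>
          Pot \<phi> N (\<lambda>i. proj (x (Suc j) i)) (t (Suc j)) = Pot \<phi> N (\<lambda>i. proj (x j i)) (t j))"

definition phi_exp :: "real \<Rightarrow> real \<Rightarrow> real \<Rightarrow> real" where
  "phi_exp \<eta> y s = exp (sqrt 2 * \<eta> * y - \<eta>\<^sup>2 * s)"

end

theory Submission
  imports Defs
begin

text \<open>The CP step keeps the potential constant, so with \<open>\<phi>_exp\<close> and \<open>t\<^sub>0 = 0\<close> the sum
  \<open>\<Sum>\<^sub>i exp (\<surd>2 \<eta> x\<^sub>i - \<eta>\<^sup>2 t)\<close> equals \<open>N\<close> at every iteration. At least \<open>\<lceil>N\<epsilon>\<rceil>\<close> coordinates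
  are \<open>\<ge>\<close> the \<open>\<epsilon>\<close>-quantile \<open>v\<close>, so a Markov-type count gives \<open>N\<epsilon> exp (\<surd>2 \<eta> v - \<eta>\<^sup>2 t) \<le> N\<close>;
  taking logarithms yields the bound.\<close>

lemma cp_run_Pot_eq_initial:
  assumes "cp_run N B \<phi> proj t0 l p x t"
  shows "Pot \<phi> N (\<lambda>i. proj (x j i)) (t j) = Pot \<phi> N (\<lambda>i. proj 0) t0"
proof (induction j)
  case 0
  then show ?case using assms by (simp add: cp_run_def)
next
  case (Suc j)
  then show ?case using assms unfolding cp_run_def by metis
qed

lemma kth_largest_eq_sorted_nth:
  assumes "1 \<le> k" "k \<le> N"
  shows "kth_largest N x k = sort (map x [0..<N]) ! (N - k)"
  using assms by (simp add: kth_largest_def rev_nth)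

lemma sum_list_sorted_ge_nth_from_end:
  fixes f :: "'a::linorder \<Rightarrow> real"
  assumes "sorted ys" "mono f" "\<And>y. 0 \<le> f y" "k \<le> length ys"
  shows "real k * f (ys ! (length ys - k)) \<le> sum_list (map f ys)"
proof -
  let ?n = "length ys"
  have "real k * f (ys ! (?n - k)) = (\<Sum>j\<in>{?n-k..<?n}. f (ys ! (?n - k)))"
    using assms(4) by simp
  also have "\<dots> \<le> (\<Sum>j\<in>{?n-k..<?n}. f (ys ! j))"
  proof (rule sum_mono)
    fix j assume "j \<in> {?n-k..<?n}"
    then have "ys ! (?n - k) \<le> ys ! j" using assms(1) by (auto intro: sorted_nth_mono)
    then show "f (ys ! (?n - k)) \<le> f (ys ! j)" using assms(2) by (simp add: monoD)
  qed
  also have "\<dots> \<le> (\<Sum>j<?n. f (ys ! j))"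
    by (rule sum_mono2) (auto simp: assms(3))
  also have "\<dots> = sum_list (map f ys)"
    by (simp add: sum_list_sum_nth atLeast0LessThan)
  finally show ?thesis .
qed

lemma kth_largest_Markov:
  fixes f :: "real \<Rightarrow> real"
  assumes "mono f" "\<And>y. 0 \<le> f y" "1 \<le> k" "k \<le> N"
  shows "real k * f (kth_largest N x k) \<le> (\<Sum>i<N. f (x i))"
proof -
  let ?ys = "sort (map x [0..<N])"
  have "sum_list (map f ?ys) = sum_list (map f (map x [0..<N]))"
    by (metis mset_map mset_sort sum_mset_sum_list)
  also have "\<dots> = (\<Sum>i<N. f (x i))"
    by (simp add: sum_list_sum_nth atLeast0LessThan)
  finally show ?thesis
    using sum_list_sorted_ge_nth_from_end[of ?ys f k] assms
    by (simp add: kth_largest_eq_sorted_nth)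
qed

lemma quantile_index_bounds:
  assumes "0 < N" "0 < \<epsilon>" "\<epsilon> \<le> 1"
  shows "1 \<le> nat \<lceil>real N * \<epsilon>\<rceil>" "nat \<lceil>real N * \<epsilon>\<rceil> \<le> N"
    and "real N * \<epsilon> \<le> real (nat \<lceil>real N * \<epsilon>\<rceil>)"
proof -
  have pos: "0 < real N * \<epsilon>" using assms by simp
  then show "1 \<le> nat \<lceil>real N * \<epsilon>\<rceil>" "real N * \<epsilon> \<le> real (nat \<lceil>real N * \<epsilon>\<rceil>)"
    by linarith+
  have "real N * \<epsilon> \<le> real N" using assms by (simp add: mult_left_le)
  then show "nat \<lceil>real N * \<epsilon>\<rceil> \<le> N" by (simp add: ceiling_le_iff nat_le_iff)
qed

lemma quantile_regret_Markov:
  fixes f :: "real \<Rightarrow> real"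
  assumes "mono f" "\<And>y. 0 \<le> f y" "0 < N" "0 < \<epsilon>" "\<epsilon> \<le> 1"
  shows "real N * \<epsilon> * f (quantile_regret N \<epsilon> x) \<le> (\<Sum>i<N. f (x i))"
proof -
  let ?k = "nat \<lceil>real N * \<epsilon>\<rceil>"
  note k = quantile_index_bounds[OF assms(3-5)]
  have "real N * \<epsilon> * f (quantile_regret N \<epsilon> x) \<le> real ?k * f (kth_largest N x ?k)"
    using k(3) assms(2) by (simp add: quantile_regret_def mult_right_mono)
  also have "\<dots> \<le> (\<Sum>i<N. f (x i))"
    using kth_largest_Markov[OF assms(1,2) k(1,2)] .
  finally show ?thesis .
qed

lemma mono_phi_exp:
  assumes "0 < \<eta>"
  shows "mono (\<lambda>y. phi_exp \<eta> y s)"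
  using assms by (auto simp: mono_def phi_exp_def intro!: mult_left_mono)

lemma phi_exp_bound_imp_le:
  assumes "0 < \<eta>" "0 < \<epsilon>" "\<epsilon> * phi_exp \<eta> v s \<le> 1"
  shows "v \<le> \<eta> * s / sqrt 2 + ln (1 / \<epsilon>) / (sqrt 2 * \<eta>)"
proof -
  have "ln \<epsilon> + (sqrt 2 * \<eta> * v - \<eta>\<^sup>2 * s) \<le> 0"
    using assms(2,3) ln_le_zero_iff[of "\<epsilon> * phi_exp \<eta> v s"]
    by (simp add: phi_exp_def ln_mult)
  then have "sqrt 2 * \<eta> * v \<le> \<eta>\<^sup>2 * s + ln (1 / \<epsilon>)"
    using assms(2) by (simp add: ln_div)
  then have "v \<le> (\<eta>\<^sup>2 * s + ln (1 / \<epsilon>)) / (sqrt 2 * \<eta>)"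
    using assms(1) by (simp add: pos_le_divide_eq mult.commute mult.left_commute)
  also have "\<dots> = \<eta> * s / sqrt 2 + ln (1 / \<epsilon>) / (sqrt 2 * \<eta>)"
    using assms(1) by (simp add: field_simps power2_eq_square)
  finally show ?thesis .
qed

theorem lemma3p3:
  fixes N :: nat and B \<eta> \<epsilon> :: real
    and l p x :: "nat \<Rightarrow> nat \<Rightarrow> real" and t :: "nat \<Rightarrow> real"
  assumes "0 < N" and "0 < B" and "0 < \<eta>" and "0 < \<epsilon>" and "\<epsilon> \<le> 1"
    and "cp_run N B (phi_exp \<eta>) (\<lambda>y. y) 0 l p x t"
  shows "\<forall>j. quantile_regret N \<epsilon> (x j) \<le> \<eta> * t j / sqrt 2 + ln (1 / \<epsilon>) / (sqrt 2 * \<eta>)"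
proof
  fix j
  let ?v = "quantile_regret N \<epsilon> (x j)"
  have "Pot (phi_exp \<eta>) N (x j) (t j) = real N"
    using cp_run_Pot_eq_initial[OF assms(6), of j] by (simp add: Pot_def phi_exp_def)
  then have "real N * (\<epsilon> * phi_exp \<eta> ?v (t j)) \<le> real N * 1"
    using quantile_regret_Markov[OF mono_phi_exp[OF assms(3)] _ assms(1,4,5), of "t j" "x j"]
    by (simp add: Pot_def phi_exp_def mult.assoc)
  then have "\<epsilon> * phi_exp \<eta> ?v (t j) \<le> 1"
    using assms(1) by simp
  then show "?v \<le> \<eta> * t j / sqrt 2 + ln (1 / \<epsilon>) / (sqrt 2 * \<eta>)"
    using phi_exp_bound_imp_le assms(3,4) by blast
qed

end
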